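(* Consider $M$ positioning infrastructures; for the $m$-th infrastructure let $N_{\text{min}}^m$ be the minimum number of anchors required for positioning, $N_{\text{anc}}^m$ the total number of anchors providing ranging information, and $N_{\text{adv}}^m$ the number of anchors whose ranging information is manipulated by an uncoordinated attacker. Suppose that $$\left|\left\{m \mid N_{\text{anc}}^m - N_{\text{adv}}^m - N_{\text{min}}^m = 0\right\}\right| > 1 \ \lor\ \exists m,\ N_{\text{anc}}^m - N_{\text{adv}}^m - N_{\text{min}}^m > 0.$$ Then the true position $\mathbf{p}_{\text{usr}}(t)$ can be recovered from uncoordinated spoofing.
   Context: Idealized model of subset-based integrity monitoring across multiple infrastructures (e.g., GNSS, Wi-Fi, cellular): a platform at unknown true position $\mathbf{p}_{\text{usr}}(t)\in\mathbb{R}^3$ receives ranging measurements from anchors with known positions. Within each infrastructure $m$, for every subset of its anchors of size at least $N_{\text{min}}^m$ a position estimate is computed. Positioning noise and uncertainties are negligible (zero) while attacker-induced deviations are preserved, and geometry is good, so every benign-only subset yields exactly $\mathbf{p}_{\text{usr}}(t)$. "Uncoordinated spoofing" means manipulated ranging values are chosen independently (potentially randomly), so estimates from subsets involving manipulated measurements are random positions, almost surely inconsistent with the benign position and each other; "recovered" means the spoofed estimates can be excluded so that the remaining (more than one, mutually consistent) benign estimates give $\mathbf{p}_{\text{usr}}(t)$. *)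

theory Defs
  imports "HOL-Analysis.Analysis"
begin

text \<open>Anc m is the finite set of
anchors of infrastructure m, Adv m \<subseteq> Anc m the manipulated ones, Nmin m the minimum
number of anchors for positioning. A subset estimate is indexed by a pair (m, S) with
S \<subseteq> Anc m and card S \<ge> Nmin m; est m S :: real^3 is its position estimate.\<close>

definition subset_indices ::
  "nat \<Rightarrow> (nat \<Rightarrow> 'a set) \<Rightarrow> (nat \<Rightarrow> nat) \<Rightarrow> (nat \<times> 'a set) set" where
  "subset_indices M Anc Nmin = {(m, S). m < M \<and> S \<subseteq> Anc m \<and> Nmin m \<le> card S}"

text \<open>Noise-free geometry: every benign-only subset yields exactly the true position.\<close>
definition benign_exact where
  "benign_exact M Anc Adv Nmin est p \<longleftrightarrow>
     (\<forall>(m, S) \<in> subset_indices M Anc Nmin. S \<inter> Adv m = {} \<longrightarrow> est m S = p)"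

text \<open>Uncoordinated spoofing (almost-sure genericity): every estimate from a subset
involving a manipulated measurement differs from the true position and from every
other such estimate.\<close>
definition uncoordinated_spoofing where
  "uncoordinated_spoofing M Anc Adv Nmin est p \<longleftrightarrow>
     (\<forall>(m, S) \<in> subset_indices M Anc Nmin. S \<inter> Adv m \<noteq> {} \<longrightarrow>
        est m S \<noteq> p \<and>
        (\<forall>(m', S') \<in> subset_indices M Anc Nmin. S' \<inter> Adv m' \<noteq> {} \<longrightarrow>
            (m', S') \<noteq> (m, S) \<longrightarrow> est m' S' \<noteq> est m S))"

definition support where
  "support M Anc Nmin est q = card {(m, S) \<in> subset_indices M Anc Nmin. est m S = q}"

text \<open>Recovered: after excluding inconsistent (spoofed) estimates, the remaining mutually
consistent estimates (more than one) give p, and p is the only position on which more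
than one estimate agrees.\<close>
definition recovered where
  "recovered M Anc Nmin est p \<longleftrightarrow>
     support M Anc Nmin est p > 1 \<and> (\<forall>q. support M Anc Nmin est q > 1 \<longrightarrow> q = p)"

end

theory Submission
  imports Defs
begin

text \<open>Every benign-only subset estimate equals the true position, while spoofed estimates are
pairwise distinct and differ from it; hence the true position is the only candidate supported
by two estimates, and it suffices to exhibit two distinct benign-only subsets. If two
infrastructures have exactly the minimum number of benign anchors, their full benign anchor
sets will do; if one infrastructure has a spare benign anchor, take its full benign anchor
set and the same set with one anchor removed.\<close>

lemma finite_subset_indices:
  assumes "\<And>m. m < M \<Longrightarrow> finite (Anc m)"
  shows "finite (subset_indices M Anc Nmin)"
proof (rule finite_subset)
  show "subset_indices M Anc Nmin \<subseteq> (\<Union>m<M. {m} \<times> Pow (Anc m))"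
    unfolding subset_indices_def by auto
  show "finite (\<Union>m<M. {m} \<times> Pow (Anc m))"
    using assms by auto
qed

lemma one_less_card_iff:
  assumes "finite A"
  shows "1 < card A \<longleftrightarrow> (\<exists>a\<in>A. \<exists>b\<in>A. a \<noteq> b)"
  using card_le_Suc0_iff_eq[OF assms] by (auto simp: not_le[symmetric])

lemma benign_subset_index:
  assumes "m < M" "finite (Anc m)" "Adv m \<subseteq> Anc m" "T \<subseteq> Anc m - Adv m"
    and "int (Nmin m) + int (card T) \<le> int (card (Anc m)) - int (card (Adv m))"
  shows "(m, Anc m - Adv m - T) \<in> subset_indices M Anc Nmin"
proof -
  have "card (Anc m - Adv m - T) = card (Anc m) - card (Adv m) - card T"
    using assms(2-4) by (simp add: card_Diff_subset finite_subset)
  then show ?thesis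
    using assms(1,5) unfolding subset_indices_def by auto
qed

lemma two_benign_subset_indices:
  assumes fin: "\<And>m. m < M \<Longrightarrow> finite (Anc m)"
    and adv_sub: "\<And>m. m < M \<Longrightarrow> Adv m \<subseteq> Anc m"
    and cond: "card {m. m < M \<and> int (card (Anc m)) - int (card (Adv m)) - int (Nmin m) = 0} > 1
            \<or> (\<exists>m < M. int (card (Anc m)) - int (card (Adv m)) - int (Nmin m) > 0)"
  obtains m S m' S' where
    "(m, S) \<in> subset_indices M Anc Nmin" "S \<inter> Adv m = {}"
    "(m', S') \<in> subset_indices M Anc Nmin" "S' \<inter> Adv m' = {}"
    "(m, S) \<noteq> (m', S')"
  using cond
proof
  let ?Z = "{m. m < M \<and> int (card (Anc m)) - int (card (Adv m)) - int (Nmin m) = 0}"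
  assume "card ?Z > 1"
  then obtain m m' where Z: "m \<in> ?Z" "m' \<in> ?Z" and "m \<noteq> m'"
    using one_less_card_iff[of ?Z] card.infinite by fastforce
  have "(k, Anc k - Adv k - {}) \<in> subset_indices M Anc Nmin" if "k \<in> ?Z" for k
    using that by (intro benign_subset_index) (auto simp: fin adv_sub)
  with Z \<open>m \<noteq> m'\<close> show thesis
    by (intro that[of m "Anc m - Adv m - {}" m' "Anc m' - Adv m' - {}"]) auto
next
  assume "\<exists>m < M. int (card (Anc m)) - int (card (Adv m)) - int (Nmin m) > 0"
  then obtain m where m: "m < M" "int (card (Anc m)) - int (card (Adv m)) - int (Nmin m) > 0"
    by blast
  have "card (Anc m - Adv m) = card (Anc m) - card (Adv m)"
    using fin[OF m(1)] adv_sub[OF m(1)] by (simp add: card_Diff_subset finite_subset)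
  moreover have "card (Adv m) < card (Anc m)"
    using m(2) by linarith
  ultimately have "Anc m - Adv m \<noteq> {}"
    by (metis card.empty zero_less_diff less_irrefl)
  then obtain x where x: "x \<in> Anc m - Adv m"
    by blast
  have idx: "(m, Anc m - Adv m - T) \<in> subset_indices M Anc Nmin" if "T \<subseteq> {x}" for T
  proof (intro benign_subset_index)
    have "card T \<le> 1"
      using card_mono[OF _ that] by simp
    then show "int (Nmin m) + int (card T) \<le> int (card (Anc m)) - int (card (Adv m))"
      using m(2) by linarith
  qed (use m(1) fin adv_sub x that in auto)
  from idx[of "{}"] idx[of "{x}"] x show thesis
    by (intro that[of m "Anc m - Adv m - {}" m "Anc m - Adv m - {x}"]) auto
qed

lemma support_true_position:
  assumes "finite (subset_indices M Anc Nmin)"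
    and "benign_exact M Anc Adv Nmin est p"
    and "(m, S) \<in> subset_indices M Anc Nmin" "S \<inter> Adv m = {}"
    and "(m', S') \<in> subset_indices M Anc Nmin" "S' \<inter> Adv m' = {}"
    and "(m, S) \<noteq> (m', S')"
  shows "support M Anc Nmin est p > 1"
proof -
  let ?P = "{(m, S) \<in> subset_indices M Anc Nmin. est m S = p}"
  have "(m, S) \<in> ?P" "(m', S') \<in> ?P"
    using assms(2-6) unfolding benign_exact_def by auto
  moreover have "finite ?P"
    using assms(1) by (rule finite_subset[rotated]) auto
  ultimately show ?thesis
    unfolding support_def using assms(7) by (subst one_less_card_iff) auto
qed

lemma support_spoofed_position:
  assumes "benign_exact M Anc Adv Nmin est p"
    and "uncoordinated_spoofing M Anc Adv Nmin est p"
    and "q \<noteq> p"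
  shows "support M Anc Nmin est q \<le> 1"
proof -
  let ?Q = "{(m, S) \<in> subset_indices M Anc Nmin. est m S = q}"
  have spoofed: "S \<inter> Adv m \<noteq> {}" if "(m, S) \<in> ?Q" for m S
    using that assms(1,3) unfolding benign_exact_def by auto
  have "\<forall>i\<in>?Q. \<forall>j\<in>?Q. i = j"
    using spoofed assms(2) unfolding uncoordinated_spoofing_def by fastforce
  then show ?thesis
    unfolding support_def
    by (cases "finite ?Q") (simp_all add: card_le_Suc0_iff_eq)
qed

theorem theorem1:
  fixes M :: nat
    and Anc Adv :: "nat \<Rightarrow> 'a set"
    and Nmin :: "nat \<Rightarrow> nat"
    and est :: "nat \<Rightarrow> 'a set \<Rightarrow> real ^ 3"
    and p_usr :: "real ^ 3"
  assumes fin: "\<And>m. m < M \<Longrightarrow> finite (Anc m)"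
    and adv_sub: "\<And>m. m < M \<Longrightarrow> Adv m \<subseteq> Anc m"
    and geom: "benign_exact M Anc Adv Nmin est p_usr"
    and unc: "uncoordinated_spoofing M Anc Adv Nmin est p_usr"
    and cond: "card {m. m < M \<and> int (card (Anc m)) - int (card (Adv m)) - int (Nmin m) = 0} > 1
            \<or> (\<exists>m < M. int (card (Anc m)) - int (card (Adv m)) - int (Nmin m) > 0)"
  shows "recovered M Anc Nmin est p_usr"
proof -
  obtain m S m' S' where
    "(m, S) \<in> subset_indices M Anc Nmin" "S \<inter> Adv m = {}"
    "(m', S') \<in> subset_indices M Anc Nmin" "S' \<inter> Adv m' = {}"
    "(m, S) \<noteq> (m', S')"
    using two_benign_subset_indices[OF fin adv_sub cond] .
  then have "support M Anc Nmin est p_usr > 1"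
    using support_true_position[OF finite_subset_indices[OF fin] geom] by blast
  moreover have "q = p_usr" if "support M Anc Nmin est q > 1" for q
    using support_spoofed_position[OF geom unc] that by force
  ultimately show ?thesis
    unfolding recovered_def by blast
qed

end
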